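(* Every good set is a basis of $\mathbb R^{2k}$.
   Context: Let $k\ge2$, $n=2k-1$. Let $e_1,\dots,e_k$ be the standard basis of $\mathbb R^k$ and for $r\in\mathbb R$ let $r_{(k)}=(r,\dots,r)\in\mathbb R^k$. For $j=1,\dots,k$ define points of $\mathbb R^{2k}=\mathbb R^k\times\mathbb R^k$: $A_j=(e_j,0_{(k)})$, $B_j=\frac{1}{2n}(2_{(k)}-e_j,\,2_{(k)}-e_j)$, $C_j=(0_{(k)},e_j)$. Let $A=\{A_j\}$, $B=\{B_j\}$, $C=\{C_j\}$, $X=A\cup B\cup C$. A subset $S\subset X$ with $2k$ elements is good if it contains no set of the form $\{A_j,B_j,C_j\}$ and $S\neq A\cup C$. *)

theory Defs
  imports "HOL-Analysis.Analysis"
begin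

text \<open>R^{2k} is modelled as R^k x R^k, i.e. the product type (real^'k) x (real^'k),
  where k = CARD('k). The standard basis vector e_j is axis j 1, and r_(k) is vec r.\<close>

definition nval :: "'k::finite itself \<Rightarrow> real" where
  "nval _ = 2 * real CARD('k) - 1"

definition ptA :: "'k::finite \<Rightarrow> (real^'k) \<times> (real^'k)" where
  "ptA j = (axis j 1, 0)"

definition ptB :: "'k::finite \<Rightarrow> (real^'k) \<times> (real^'k)" where
  "ptB j = (1 / (2 * nval TYPE('k))) *\<^sub>R (vec 2 - axis j 1, vec 2 - axis j 1)"

definition ptC :: "'k::finite \<Rightarrow> (real^'k) \<times> (real^'k)" where
  "ptC j = (0, axis j 1)"

definition setA :: "((real^'k::finite) \<times> (real^'k)) set" where
  "setA = range ptA"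

definition setB :: "((real^'k::finite) \<times> (real^'k)) set" where
  "setB = range ptB"

definition setC :: "((real^'k::finite) \<times> (real^'k)) set" where
  "setC = range ptC"

definition setX :: "((real^'k::finite) \<times> (real^'k)) set" where
  "setX = setA \<union> setB \<union> setC"

definition good :: "((real^'k::finite) \<times> (real^'k)) set \<Rightarrow> bool" where
  "good S \<longleftrightarrow> S \<subseteq> setX \<and> card S = 2 * CARD('k)
     \<and> (\<forall>j. \<not> {ptA j, ptB j, ptC j} \<subseteq> S)
     \<and> S \<noteq> setA \<union> setC"

end

theory Submission
  imports Defs
begin

text \<open>Take a vanishing linear combination of S with coefficients a_j, b_j, c_j at
  A_j, B_j, C_j (zero for points outside S) and put T = b_1 + ... + b_k. Reading off the
  coordinates gives a_i = c_i = (b_i - 2T)/(2n). If B_i lies in S then A_i or C_i does not,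
  so b_i = 2T; otherwise b_i = 0. Summing over i yields T = 2mT, where m is the number of
  points of B in S; m > 0 because A \<union> C already has 2k points and S \<noteq> A \<union> C.
  Hence T = 0 and all coefficients vanish, and 2k independent vectors form a basis.
  Neither k \<ge> 2 nor the exact value of n plays a role, only n > 0.\<close>

lemma nval_pos: "nval TYPE('k::finite) > 0"
proof -
  have "real CARD('k) \<ge> 1" by simp
  then show ?thesis unfolding nval_def by linarith
qed

lemma inj_ptA: "inj ptA"
  by (simp add: inj_def ptA_def axis_eq_axis)

lemma inj_ptC: "inj ptC"
  by (simp add: inj_def ptC_def axis_eq_axis)

lemma ptB_component:
  "fst (ptB j) $ i = (2 - of_bool (i = j)) / (2 * nval TYPE('k))"
  "snd (ptB j) $ i = (2 - of_bool (i = j)) / (2 * nval TYPE('k))"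
  for i j :: "'k::finite"
  by (simp_all add: ptB_def axis_def)

lemma inj_ptB: "inj (ptB :: 'k::finite \<Rightarrow> _)"
proof (rule injI)
  fix i j :: 'k
  assume "ptB i = ptB j"
  then have "fst (ptB i) $ i = fst (ptB j) $ i" by simp
  then show "i = j" using nval_pos[where 'k='k] by (simp add: ptB_component split: if_splits)
qed

lemma setA_Un_setC_disjoint_setB: "(setA \<union> setC) \<inter> setB = {}"
proof -
  have "ptB j \<notin> setA \<union> setC" for j :: "'k::finite"
  proof
    assume "ptB j \<in> setA \<union> setC"
    then have "fst (ptB j) $ j = 0 \<or> snd (ptB j) $ j = 0"
      by (auto simp: setA_def setC_def ptA_def ptC_def)
    then show False using nval_pos[where 'k='k] by (simp add: ptB_component)
  qed
  then show ?thesis unfolding setB_def by blast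
qed

lemma setA_disjoint_setC: "setA \<inter> setC = {}"
  by (auto simp: setA_def setC_def ptA_def ptC_def axis_eq_0_iff)

lemma card_setA_Un_setC: "card (setA \<union> setC :: ((real^'k::finite) \<times> (real^'k)) set) = 2 * CARD('k)"
  using setA_disjoint_setC unfolding setA_def setC_def
  by (subst card_Un_disjoint) (simp_all add: card_image inj_ptA inj_ptC)

lemma finite_setX: "finite setX"
  by (simp add: setX_def setA_def setB_def setC_def)

lemma sum_setX:
  fixes h :: "(real^'k::finite) \<times> (real^'k) \<Rightarrow> 'a::comm_monoid_add"
  shows "sum h setX = (\<Sum>j\<in>UNIV. h (ptA j)) + (\<Sum>j\<in>UNIV. h (ptB j)) + (\<Sum>j\<in>UNIV. h (ptC j))"
proof -
  have fin: "finite setA" "finite setB" "finite setC"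
    by (simp_all add: setA_def setB_def setC_def)
  have "sum h setX = sum h (setA \<union> setC \<union> setB)"
    by (simp add: setX_def Un_ac)
  also have "\<dots> = sum h (setA \<union> setC) + sum h setB"
    by (intro sum.union_disjoint finite_UnI fin setA_Un_setC_disjoint_setB)
  also have "sum h (setA \<union> setC) = sum h setA + sum h setC"
    by (intro sum.union_disjoint fin setA_disjoint_setC)
  finally show ?thesis
    by (simp add: setA_def setB_def setC_def sum.reindex inj_ptA inj_ptB inj_ptC ac_simps)
qed

lemma sum_scaleR_ptA: "(\<Sum>j\<in>UNIV. a j *\<^sub>R ptA j) = ((\<chi> i. a i), 0)"
  by (simp add: prod_eq_iff vec_eq_iff fst_sum snd_sum sum_component ptA_def axis_def
      if_distrib cong: if_cong)

lemma sum_scaleR_ptC: "(\<Sum>j\<in>UNIV. c j *\<^sub>R ptC j) = (0, (\<chi> i. c i))"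
  by (simp add: prod_eq_iff vec_eq_iff fst_sum snd_sum sum_component ptC_def axis_def
      if_distrib cong: if_cong)

lemma sum_scaleR_ptB_component:
  fixes b :: "'k::finite \<Rightarrow> real"
  shows "fst (\<Sum>j\<in>UNIV. b j *\<^sub>R ptB j) $ i = (2 * sum b UNIV - b i) / (2 * nval TYPE('k))"
    and "snd (\<Sum>j\<in>UNIV. b j *\<^sub>R ptB j) $ i = (2 * sum b UNIV - b i) / (2 * nval TYPE('k))"
proof -
  have "(\<Sum>j\<in>UNIV. b j * (2 - of_bool (i = j))) = (\<Sum>j\<in>UNIV. 2 * b j - (if i = j then b j else 0))"
    by (rule sum.cong) auto
  then have "(\<Sum>j\<in>UNIV. b j * (2 - of_bool (i = j))) = 2 * sum b UNIV - b i"
    by (simp add: sum_subtractf sum_distrib_left)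
  then show "fst (\<Sum>j\<in>UNIV. b j *\<^sub>R ptB j) $ i = (2 * sum b UNIV - b i) / (2 * nval TYPE('k))"
    and "snd (\<Sum>j\<in>UNIV. b j *\<^sub>R ptB j) $ i = (2 * sum b UNIV - b i) / (2 * nval TYPE('k))"
    by (simp_all add: fst_sum snd_sum sum_component ptB_component sum_divide_distrib[symmetric])
qed

lemma combination_setX_eq_0_coeffs:
  fixes g :: "(real^'k::finite) \<times> (real^'k) \<Rightarrow> real"
  assumes "(\<Sum>x\<in>setX. g x *\<^sub>R x) = 0"
  shows "g (ptA i) = (g (ptB i) - 2 * (\<Sum>j\<in>UNIV. g (ptB j))) / (2 * nval TYPE('k))"
    and "g (ptC i) = (g (ptB i) - 2 * (\<Sum>j\<in>UNIV. g (ptB j))) / (2 * nval TYPE('k))"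
proof -
  let ?b = "\<lambda>j. g (ptB j)"
  have split: "(\<Sum>j\<in>UNIV. g (ptA j) *\<^sub>R ptA j) + (\<Sum>j\<in>UNIV. ?b j *\<^sub>R ptB j)
      + (\<Sum>j\<in>UNIV. g (ptC j) *\<^sub>R ptC j) = 0"
    using assms by (simp add: sum_setX)
  from arg_cong[where f = "\<lambda>v. fst v $ i", OF split]
  have "g (ptA i) + (2 * sum ?b UNIV - ?b i) / (2 * nval TYPE('k)) = 0"
    by (simp add: sum_scaleR_ptA sum_scaleR_ptC sum_scaleR_ptB_component)
  then show "g (ptA i) = (?b i - 2 * sum ?b UNIV) / (2 * nval TYPE('k))"
    using nval_pos[where 'k='k] by (simp add: field_simps)
  from arg_cong[where f = "\<lambda>v. snd v $ i", OF split]
  have "g (ptC i) + (2 * sum ?b UNIV - ?b i) / (2 * nval TYPE('k)) = 0"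
    by (simp add: sum_scaleR_ptA sum_scaleR_ptC sum_scaleR_ptB_component)
  then show "g (ptC i) = (?b i - 2 * sum ?b UNIV) / (2 * nval TYPE('k))"
    using nval_pos[where 'k='k] by (simp add: field_simps)
qed

lemma independent_if_no_triple:
  fixes S :: "((real^'k::finite) \<times> (real^'k)) set"
  assumes S_sub: "S \<subseteq> setX"
    and no_triple: "\<And>j. \<not> {ptA j, ptB j, ptC j} \<subseteq> S"
    and meets_B: "S \<inter> setB \<noteq> {}"
  shows "independent S"
proof (rule independent_if_scalars_zero)
  show "finite S"
    using finite_subset[OF S_sub finite_setX] .
  fix f x
  assume comb: "(\<Sum>x\<in>S. f x *\<^sub>R x) = 0" and "x \<in> S"
  define g where "g y = (if y \<in> S then f y else 0)" for y
  have "(\<Sum>y\<in>setX. g y *\<^sub>R y) = (\<Sum>y\<in>setX. if y \<in> S then f y *\<^sub>R y else 0)"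
    by (intro sum.cong) (simp_all add: g_def)
  also have "\<dots> = (\<Sum>y\<in>setX \<inter> S. f y *\<^sub>R y)"
    by (simp add: sum.inter_restrict finite_setX)
  also have "setX \<inter> S = S"
    using S_sub by blast
  finally have g_comb: "(\<Sum>y\<in>setX. g y *\<^sub>R y) = 0"
    using comb by simp
  define T where "T = (\<Sum>j\<in>UNIV. g (ptB j))"
  define d where "d = 2 * nval TYPE('k)"
  have "d > 0"
    using nval_pos[where 'k='k] by (simp add: d_def)
  have gA: "g (ptA i) = (g (ptB i) - 2 * T) / d" and gC: "g (ptC i) = (g (ptB i) - 2 * T) / d" for i
    using combination_setX_eq_0_coeffs[OF g_comb] by (simp_all add: T_def d_def)
  have gB: "g (ptB j) = (if ptB j \<in> S then 2 * T else 0)" for j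
  proof (cases "ptB j \<in> S")
    case True
    with no_triple[of j] have "g (ptA j) = 0 \<or> g (ptC j) = 0"
      by (auto simp: g_def)
    then have "(g (ptB j) - 2 * T) / d = 0"
      using gA gC by metis
    with True \<open>d > 0\<close> show ?thesis
      by simp
  qed (simp add: g_def)
  have "T = (\<Sum>j\<in>UNIV. g (ptB j))"
    by (fact T_def)
  also have "\<dots> = (\<Sum>j\<in>UNIV. if ptB j \<in> S then 2 * T else 0)"
    by (intro sum.cong refl gB)
  also have "\<dots> = 2 * T * card {j. ptB j \<in> S}"
    by (simp add: sum.If_cases)
  finally have "T * (2 * real (card {j. ptB j \<in> S}) - 1) = 0"
    by (simp add: algebra_simps)
  moreover have "{j. ptB j \<in> S} \<noteq> {}"
    using meets_B by (auto simp: setB_def)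
  then have "card {j. ptB j \<in> S} \<ge> 1"
    by (simp add: Suc_le_eq card_gt_0_iff)
  ultimately have "T = 0"
    by simp
  then have "g y = 0" if "y \<in> setX" for y
    using that gA gC gB by (auto simp: setX_def setA_def setB_def setC_def)
  with \<open>x \<in> S\<close> S_sub have "g x = 0"
    by blast
  with \<open>x \<in> S\<close> show "f x = 0"
    by (simp add: g_def)
qed

theorem mainTheorem6:
  fixes S :: "((real^'k::finite) \<times> (real^'k)) set"
  assumes "CARD('k) \<ge> 2"
    and "good S"
  shows "independent S \<and> span S = UNIV"
proof -
  from \<open>good S\<close> have S_sub: "S \<subseteq> setX" and card_S: "card S = 2 * CARD('k)"
    and no_triple: "\<And>j. \<not> {ptA j, ptB j, ptC j} \<subseteq> S" and "S \<noteq> setA \<union> setC"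
    unfolding good_def by auto
  have "S \<inter> setB \<noteq> {}"
  proof
    assume "S \<inter> setB = {}"
    with S_sub have "S \<subseteq> setA \<union> setC"
      by (auto simp: setX_def)
    moreover have "finite (setA \<union> setC :: ((real^'k) \<times> (real^'k)) set)"
      using finite_setX finite_subset by (auto simp: setX_def)
    ultimately have "S = setA \<union> setC"
      using card_S card_setA_Un_setC[where 'k='k] by (intro card_subset_eq) simp_all
    with \<open>S \<noteq> setA \<union> setC\<close> show False ..
  qed
  with S_sub no_triple have indep: "independent S"
    by (rule independent_if_no_triple)
  have "UNIV \<subseteq> span S"
    using card_eq_dim[of S UNIV] indep card_S finite_subset[OF S_sub finite_setX]
    by (simp add: dim_UNIV)
  with indep show ?thesis
    by auto
qed

end
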